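(* Let $\mathcal C$ be an irredundant 3-SAT formula and let $u,v,w$ be distinct variables. Suppose there are distinct variables $a,b\notin\{u,v,w\}$ with $abu,abv,abw\in\mathcal C$. Then (a) $\bar u\bar v w\notin\mathcal C$; and (b) if $\bar u\bar v\bar w\in\mathcal C$, then there is no variable $c\notin\{u,v,w,a,b\}$ with $abc\in\mathcal C$.
   Context: A clause is a conjunction of three literals on three distinct variables, written as juxtaposition (e.g. $\bar u\bar v w=\bar u\wedge\bar v\wedge w$); a formula is a nonempty set of clauses. $\mathcal C$ is irredundant if every $C\in\mathcal C$ has a witness: an assignment satisfying $C$ and no other clause of $\mathcal C$. *)

theory Defs
  imports Main
begin

type_synonym 'v lit = "'v \<times> bool"

definition pos :: "'v \<Rightarrow> 'v lit" where "pos x = (x, True)"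
definition neg :: "'v \<Rightarrow> 'v lit" where "neg x = (x, False)"

text \<open>A clause: three literals on three distinct variables (read as their conjunction).\<close>
definition is_clause :: "'v lit set \<Rightarrow> bool" where
  "is_clause C \<longleftrightarrow> card C = 3 \<and> card (fst ` C) = 3"

definition sat_lit :: "('v \<Rightarrow> bool) \<Rightarrow> 'v lit \<Rightarrow> bool" where
  "sat_lit \<sigma> l \<longleftrightarrow> \<sigma> (fst l) = snd l"

definition sat_clause :: "('v \<Rightarrow> bool) \<Rightarrow> 'v lit set \<Rightarrow> bool" where
  "sat_clause \<sigma> C \<longleftrightarrow> (\<forall>l\<in>C. sat_lit \<sigma> l)"

definition is_formula :: "'v lit set set \<Rightarrow> bool" where
  "is_formula F \<longleftrightarrow> F \<noteq> {} \<and> finite F \<and> (\<forall>C\<in>F. is_clause C)"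

definition witness :: "'v lit set set \<Rightarrow> 'v lit set \<Rightarrow> ('v \<Rightarrow> bool) \<Rightarrow> bool" where
  "witness F C \<sigma> \<longleftrightarrow> sat_clause \<sigma> C \<and> (\<forall>D\<in>F. D \<noteq> C \<longrightarrow> \<not> sat_clause \<sigma> D)"

definition irredundant :: "'v lit set set \<Rightarrow> bool" where
  "irredundant F \<longleftrightarrow> (\<forall>C\<in>F. \<exists>\<sigma>. witness F C \<sigma>)"

end

theory Submission
  imports Defs
begin

(* Clauses are conjunctions, so a witness of a clause C satisfies C and
   no other clause.  Consider the "sunflower" of clauses {a b x} sharing the positive
   core a, b.  A witness of the petal {a b x} sets a and b true; since it must not
   satisfy any other petal {a b y}, it sets every such y false.
   (a) The witness of {a b w} thus sets u, v false and w true, so it satisfies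
       {ubar vbar w}; as this clause differs from {a b w}, it cannot belong to F.
   (b) Given a fourth petal {a b c}, its witness sets u, v, w all false and so
       satisfies {ubar vbar wbar}, which therefore cannot belong to F. *)

lemma sat_lit_pos_neg [simp]:
  "sat_lit \<sigma> (pos x) \<longleftrightarrow> \<sigma> x"
  "sat_lit \<sigma> (neg x) \<longleftrightarrow> \<not> \<sigma> x"
  unfolding sat_lit_def pos_def neg_def by auto

lemma pos_neg_eq_iff [simp]:
  "pos x = pos y \<longleftrightarrow> x = y"
  "neg x = neg y \<longleftrightarrow> x = y"
  "pos x \<noteq> neg y"
  "neg x \<noteq> pos y"
  unfolding pos_def neg_def by auto

lemma sat_clause_three [simp]:
  "sat_clause \<sigma> {x, y, z} \<longleftrightarrow> sat_lit \<sigma> x \<and> sat_lit \<sigma> y \<and> sat_lit \<sigma> z"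
  unfolding sat_clause_def by simp

lemma witness_satisfies_only:
  assumes "witness F C \<sigma>" and "D \<in> F" and "sat_clause \<sigma> D"
  shows "D = C"
  using assms unfolding witness_def by blast

lemma petal_witness:
  assumes wit: "witness F {pos a, pos b, pos x} \<sigma>"
    and petal: "{pos a, pos b, pos y} \<in> F" and "y \<noteq> x" "y \<noteq> a" "y \<noteq> b"
  shows "\<sigma> a \<and> \<sigma> b \<and> \<sigma> x \<and> \<not> \<sigma> y"
proof -
  have core: "\<sigma> a" "\<sigma> b" "\<sigma> x"
    using wit unfolding witness_def by simp_all
  have "pos y \<notin> {pos a, pos b, pos x}"
    using \<open>y \<noteq> x\<close> \<open>y \<noteq> a\<close> \<open>y \<noteq> b\<close> by simp
  then have "\<not> sat_clause \<sigma> {pos a, pos b, pos y}"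
    using witness_satisfies_only[OF wit petal] by blast
  with core show ?thesis by simp
qed

theorem mainTheorem8:
  fixes F :: "'v lit set set" and u v w a b :: 'v
  assumes "is_formula F" and "irredundant F"
    and "u \<noteq> v" "u \<noteq> w" "v \<noteq> w"
    and "a \<noteq> b" "a \<notin> {u, v, w}" "b \<notin> {u, v, w}"
    and "{pos a, pos b, pos u} \<in> F" "{pos a, pos b, pos v} \<in> F" "{pos a, pos b, pos w} \<in> F"
  shows "{neg u, neg v, pos w} \<notin> F \<and>
         ({neg u, neg v, neg w} \<in> F \<longrightarrow>
            \<not> (\<exists>c. c \<notin> {u, v, w, a, b} \<and> {pos a, pos b, pos c} \<in> F))"
proof (intro conjI impI notI)
  assume mixed: "{neg u, neg v, pos w} \<in> F"
  obtain \<sigma> where wit: "witness F {pos a, pos b, pos w} \<sigma>"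
    using assms(2,11) unfolding irredundant_def by blast
  have "\<sigma> w" "\<not> \<sigma> u" "\<not> \<sigma> v"
    using petal_witness[OF wit assms(9)] petal_witness[OF wit assms(10)] assms(4-8) by auto
  then have "{neg u, neg v, pos w} = {pos a, pos b, pos w}"
    using witness_satisfies_only[OF wit mixed] by simp
  moreover have "neg u \<notin> {pos a, pos b, pos w}" by simp
  ultimately show False by blast
next
  assume negative: "{neg u, neg v, neg w} \<in> F"
    and "\<exists>c. c \<notin> {u, v, w, a, b} \<and> {pos a, pos b, pos c} \<in> F"
  then obtain c where c: "c \<notin> {u, v, w, a, b}" and petal: "{pos a, pos b, pos c} \<in> F"
    by blast
  obtain \<sigma> where wit: "witness F {pos a, pos b, pos c} \<sigma>"
    using assms(2) petal unfolding irredundant_def by blast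
  have "\<not> \<sigma> u" "\<not> \<sigma> v" "\<not> \<sigma> w"
    using petal_witness[OF wit assms(9)] petal_witness[OF wit assms(10)]
      petal_witness[OF wit assms(11)] assms(7,8) c by auto
  then have "{neg u, neg v, neg w} = {pos a, pos b, pos c}"
    using witness_satisfies_only[OF wit negative] by simp
  moreover have "neg u \<notin> {pos a, pos b, pos c}" by simp
  ultimately show False by blast
qed

end
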